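(* Two quantity spaces over the same field $K$ are isomorphic (as scalable monoids) if and only if they have the same rank.
   Context: A scalable monoid over a (unital, associative) ring $R$ is a monoid $X$ (identity $1_X$, product written $xy$) together with a map $R\times X\to X$, $(\alpha,x)\mapsto\alpha\cdot x$, such that $1\cdot x=x$, $\alpha\cdot(\beta\cdot x)=\alpha\beta\cdot x$ and $\alpha\cdot(xy)=(\alpha\cdot x)y=x(\alpha\cdot y)$. A quantity space over a field $K$ is a commutative scalable monoid $Q$ over $K$ for which there exists a basis, i.e. a finite set $\{e_1,\ldots,e_n\}$ of invertible elements of $Q$ such that every $x\in Q$ has a unique expansion $x=\mu\cdot\prod_{i=1}^n e_i^{k_i}$ with $\mu\in K$ and $k_1,\ldots,k_n\in\mathbb{Z}$. All bases of a quantity space have the same cardinality $n$, called its rank. An isomorphism of scalable monoids $Q\to Q'$ over $K$ is a bijection $\phi$ with $\phi(1_Q)=1_{Q'}$, $\phi(xy)=\phi(x)\phi(y)$ and $\phi(\lambda\cdot x)=\lambda\cdot\phi(x)$ for all $x,y\in Q$, $\lambda\in K$. *)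

theory Defs
  imports Main
begin

text \<open>A quantity space is modelled on a type 'q whose commutative monoid structure
  is given by the type class comm_monoid_mult; the scalar action of the field 'k
  is an explicit operation sc.\<close>

definition scalable_monoid :: "('k::ring_1 \<Rightarrow> 'q::monoid_mult \<Rightarrow> 'q) \<Rightarrow> bool" where
  "scalable_monoid sc \<longleftrightarrow>
     (\<forall>x. sc 1 x = x) \<and>
     (\<forall>a b x. sc a (sc b x) = sc (a * b) x) \<and>
     (\<forall>a x y. sc a (x * y) = sc a x * y \<and> sc a (x * y) = x * sc a y)"

definition invertible :: "'q::monoid_mult \<Rightarrow> bool" where
  "invertible e \<longleftrightarrow> (\<exists>y. e * y = 1 \<and> y * e = 1)"

definition minv :: "'q::monoid_mult \<Rightarrow> 'q" where
  "minv e = (THE y. e * y = 1 \<and> y * e = 1)"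

definition zpow :: "'q::monoid_mult \<Rightarrow> int \<Rightarrow> 'q" where
  "zpow e k = (if 0 \<le> k then e ^ nat k else minv e ^ nat (- k))"

definition expansion :: "('k \<Rightarrow> 'q::comm_monoid_mult \<Rightarrow> 'q) \<Rightarrow> 'q set \<Rightarrow> 'k \<Rightarrow> ('q \<Rightarrow> int) \<Rightarrow> 'q" where
  "expansion sc B \<mu> k = sc \<mu> (\<Prod>e\<in>B. zpow e (k e))"

definition is_basis :: "('k::field \<Rightarrow> 'q::comm_monoid_mult \<Rightarrow> 'q) \<Rightarrow> 'q set \<Rightarrow> bool" where
  "is_basis sc B \<longleftrightarrow>
     finite B \<and> (\<forall>e\<in>B. invertible e) \<and>
     (\<forall>x. \<exists>\<mu> k. x = expansion sc B \<mu> k) \<and>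
     (\<forall>\<mu> k \<mu>' k'. expansion sc B \<mu> k = expansion sc B \<mu>' k' \<longrightarrow>
                    \<mu> = \<mu>' \<and> (\<forall>e\<in>B. k e = k' e))"

definition quantity_space :: "('k::field \<Rightarrow> 'q::comm_monoid_mult \<Rightarrow> 'q) \<Rightarrow> bool" where
  "quantity_space sc \<longleftrightarrow> scalable_monoid sc \<and> (\<exists>B. is_basis sc B)"

definition qrank :: "('k::field \<Rightarrow> 'q::comm_monoid_mult \<Rightarrow> 'q) \<Rightarrow> nat" where
  "qrank sc = card (SOME B. is_basis sc B)"

definition sm_iso :: "('k::ring_1 \<Rightarrow> 'a::monoid_mult \<Rightarrow> 'a) \<Rightarrow> ('k \<Rightarrow> 'b::monoid_mult \<Rightarrow> 'b)
                       \<Rightarrow> ('a \<Rightarrow> 'b) \<Rightarrow> bool" where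
  "sm_iso sa sb \<phi> \<longleftrightarrow> bij \<phi> \<and> \<phi> 1 = 1 \<and> (\<forall>x y. \<phi> (x * y) = \<phi> x * \<phi> y) \<and>
      (\<forall>c x. \<phi> (sa c x) = sb c (\<phi> x))"

end

theory Submission
  imports Defs
begin

text \<open>With respect to a basis \<open>B\<close>, every quantity is \<open>\<mu> \<cdot> \<Prod>e\<in>B. e ^ k e\<close> with a unique
  scalar \<open>\<mu>\<close> and a unique integer exponent vector \<open>k\<close>, and multiplication adds exponent
  vectors. A homomorphism \<open>\<phi>\<close> therefore acts on exponent vectors by the integer matrix with
  entries \<open>exponent (\<phi> b) c\<close>. For an isomorphism the matrices of \<open>\<phi>\<close> and \<open>\<phi>\<inverse>\<close> are
  mutually inverse, so the trace of their product, taken in either order, is both \<open>|B|\<close> and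
  \<open>|C|\<close>. Conversely, a bijection \<open>g\<close> between two bases of equal size gives the isomorphism
  sending the quantity with coordinates \<open>(\<mu>, k)\<close> to the one with coordinates \<open>(\<mu>, k \<circ> g)\<close>.\<close>

lemma scalable_monoidD:
  assumes "scalable_monoid sc"
  shows "sc 1 x = x" "sc a (sc b x) = sc (a * b) x"
    "sc a (x * y) = sc a x * y" "sc a (x * y) = x * sc a y"
  using assms unfolding scalable_monoid_def by metis+

lemma scale_mult_scale:
  assumes "scalable_monoid sc"
  shows "sc a x * sc b y = sc (a * b) (x * y)"
  by (metis assms scalable_monoidD(2-4))

lemma minv_eqI:
  fixes e :: "'q::comm_monoid_mult"
  assumes "e * y = 1"
  shows "minv e = y"
  unfolding minv_def
proof (rule the_equality)
  show "e * y = 1 \<and> y * e = 1" using assms by (simp add: mult.commute)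
  fix z assume "e * z = 1 \<and> z * e = 1"
  then have "z * e = 1" by simp
  have "z = z * (e * y)" using assms by simp
  also have "\<dots> = (z * e) * y" by (simp add: mult.assoc)
  finally show "z = y" using \<open>z * e = 1\<close> by simp
qed

lemma invertible_mult_minv:
  fixes e :: "'q::comm_monoid_mult"
  shows "invertible e \<Longrightarrow> e * minv e = 1"
  unfolding invertible_def using minv_eqI by metis

lemma zpow_succ:
  fixes e :: "'q::comm_monoid_mult"
  assumes "invertible e"
  shows "zpow e (k + 1) = zpow e k * e"
proof (cases "0 \<le> k")
  case True
  then have "nat (k + 1) = Suc (nat k)" by simp
  with True show ?thesis by (simp add: zpow_def mult.commute)
next
  case False
  then have "nat (- k) = Suc (nat (- (k + 1)))" by simp
  with False have "zpow e k * e = minv e ^ nat (- (k + 1)) * (minv e * e)"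
    by (simp add: zpow_def ac_simps)
  also have "\<dots> = zpow e (k + 1)"
    using False invertible_mult_minv[OF assms] by (simp add: zpow_def mult.commute)
  finally show ?thesis ..
qed

lemma zpow_pred:
  fixes e :: "'q::comm_monoid_mult"
  assumes "invertible e"
  shows "zpow e (k - 1) = zpow e k * minv e"
proof -
  have "zpow e k * minv e = zpow e (k - 1) * (e * minv e)"
    using zpow_succ[OF assms, of "k - 1"] by (simp add: mult.assoc)
  then show ?thesis using invertible_mult_minv[OF assms] by simp
qed

lemma zpow_add:
  fixes e :: "'q::comm_monoid_mult"
  assumes "invertible e"
  shows "zpow e (i + j) = zpow e i * zpow e j"
proof (induction j rule: int_induct[where k = 0])
  case base
  show ?case by (simp add: zpow_def)
next
  case (step1 j)
  then show ?case using zpow_succ[OF assms] by (metis add.assoc mult.assoc)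
next
  case (step2 j)
  then show ?case using zpow_pred[OF assms] by (metis add_diff_eq mult.assoc)
qed

definition sm_hom :: "('k::ring_1 \<Rightarrow> 'a::monoid_mult \<Rightarrow> 'a) \<Rightarrow> ('k \<Rightarrow> 'b::monoid_mult \<Rightarrow> 'b)
                       \<Rightarrow> ('a \<Rightarrow> 'b) \<Rightarrow> bool" where
  "sm_hom sa sb \<phi> \<longleftrightarrow> \<phi> 1 = 1 \<and> (\<forall>x y. \<phi> (x * y) = \<phi> x * \<phi> y) \<and>
      (\<forall>c x. \<phi> (sa c x) = sb c (\<phi> x))"

lemma sm_iso_iff_bij_sm_hom: "sm_iso sa sb \<phi> \<longleftrightarrow> bij \<phi> \<and> sm_hom sa sb \<phi>"
  unfolding sm_iso_def sm_hom_def by blast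

lemma sm_homD:
  assumes "sm_hom sa sb \<phi>"
  shows "\<phi> 1 = 1" "\<phi> (x * y) = \<phi> x * \<phi> y" "\<phi> (sa c x) = sb c (\<phi> x)"
  using assms unfolding sm_hom_def by blast+

lemma sm_hom_inv:
  assumes "sm_iso sa sb \<phi>"
  shows "sm_hom sb sa (inv \<phi>)"
proof -
  have "bij \<phi>" and hom: "sm_hom sa sb \<phi>" using assms by (simp_all add: sm_iso_iff_bij_sm_hom)
  then have inv_l: "inv \<phi> (\<phi> x) = x" and inv_r: "\<phi> (inv \<phi> y) = y" for x y
    by (simp_all add: bij_is_inj bij_is_surj surj_f_inv_f)
  show ?thesis
    unfolding sm_hom_def using sm_homD[OF hom] inv_l inv_r by metis
qed

lemma sm_hom_prod:
  fixes \<phi> :: "'a::comm_monoid_mult \<Rightarrow> 'b::comm_monoid_mult"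
  assumes "sm_hom sa sb \<phi>" "finite I"
  shows "\<phi> (\<Prod>i\<in>I. f i) = (\<Prod>i\<in>I. \<phi> (f i))"
  using assms(2) by (induction I rule: finite_induct) (simp_all add: sm_homD[OF assms(1)])

lemma sm_hom_invertible:
  assumes "sm_hom sa sb \<phi>" "invertible e"
  shows "invertible (\<phi> e)"
proof -
  obtain y where "e * y = 1" "y * e = 1" using assms(2) unfolding invertible_def by blast
  then have "\<phi> e * \<phi> y = 1" "\<phi> y * \<phi> e = 1" by (simp_all flip: sm_homD[OF assms(1)])
  then show ?thesis unfolding invertible_def by blast
qed

lemma sm_hom_zpow:
  fixes \<phi> :: "'a::comm_monoid_mult \<Rightarrow> 'b::comm_monoid_mult"
  assumes "sm_hom sa sb \<phi>" "invertible e"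
  shows "\<phi> (zpow e k) = zpow (\<phi> e) k"
proof -
  have hom_power: "\<phi> (y ^ n) = \<phi> y ^ n" for y n
    by (induction n) (simp_all add: sm_homD[OF assms(1)])
  have "\<phi> e * \<phi> (minv e) = 1"
    using invertible_mult_minv[OF assms(2)] sm_homD[OF assms(1)] by metis
  then have "\<phi> (minv e) = minv (\<phi> e)" by (simp add: minv_eqI)
  then show ?thesis by (simp add: zpow_def hom_power)
qed

locale quantity_basis =
  fixes sc :: "'k::field \<Rightarrow> 'q::comm_monoid_mult \<Rightarrow> 'q" and B :: "'q set"
  assumes scalable: "scalable_monoid sc" and basis: "is_basis sc B"
begin

lemma finite_basis: "finite B"
  and basis_invertible: "e \<in> B \<Longrightarrow> invertible e"
  and expansion_exists: "\<exists>\<mu> k. x = expansion sc B \<mu> k"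
  and expansion_unique:
    "expansion sc B \<mu> k = expansion sc B \<mu>' k' \<Longrightarrow> \<mu> = \<mu>' \<and> (\<forall>e\<in>B. k e = k' e)"
  using basis unfolding is_basis_def by blast+

definition scalar :: "'q \<Rightarrow> 'k" where
  "scalar x = (SOME \<mu>. \<exists>k. x = expansion sc B \<mu> k)"

text \<open>Only the values of \<open>exponent x\<close> on \<open>B\<close> are determined.\<close>

definition exponent :: "'q \<Rightarrow> 'q \<Rightarrow> int" where
  "exponent x = (SOME k. x = expansion sc B (scalar x) k)"

lemma expansion_scalar_exponent: "expansion sc B (scalar x) (exponent x) = x"
proof -
  have "\<exists>k. x = expansion sc B (scalar x) k"
    unfolding scalar_def using someI_ex[OF expansion_exists] .
  from someI_ex[OF this] show ?thesis unfolding exponent_def by simp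
qed

lemma scalar_expansion: "scalar (expansion sc B \<mu> k) = \<mu>"
  and exponent_expansion: "e \<in> B \<Longrightarrow> exponent (expansion sc B \<mu> k) e = k e"
  using expansion_unique[OF expansion_scalar_exponent] by blast+

lemma expansion_cong: "(\<And>e. e \<in> B \<Longrightarrow> k e = k' e) \<Longrightarrow> expansion sc B \<mu> k = expansion sc B \<mu> k'"
  unfolding expansion_def by (simp cong: prod.cong)

lemma quantity_eqI:
  assumes "scalar x = scalar y" "\<And>e. e \<in> B \<Longrightarrow> exponent x e = exponent y e"
  shows "x = y"
proof -
  have "x = expansion sc B (scalar x) (exponent x)" by (rule expansion_scalar_exponent[symmetric])
  also have "\<dots> = expansion sc B (scalar y) (exponent y)"
    unfolding assms(1) by (rule expansion_cong) (rule assms(2))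
  also have "\<dots> = y" by (rule expansion_scalar_exponent)
  finally show ?thesis .
qed

lemma expansion_one: "expansion sc B 1 (\<lambda>_. 0) = 1"
  unfolding expansion_def zpow_def by (simp add: scalable_monoidD(1)[OF scalable])

lemma expansion_mult:
  "expansion sc B \<mu> k * expansion sc B \<mu>' k' = expansion sc B (\<mu> * \<mu>') (\<lambda>e. k e + k' e)"
  unfolding expansion_def
  by (simp add: scale_mult_scale[OF scalable] zpow_add basis_invertible prod.distrib)

lemma expansion_scale: "sc a (expansion sc B \<mu> k) = expansion sc B (a * \<mu>) k"
  unfolding expansion_def by (simp add: scalable_monoidD(2)[OF scalable])

lemma expansion_basis_vector:
  assumes "b \<in> B"
  shows "expansion sc B 1 (\<lambda>e. if e = b then 1 else 0) = b"
proof -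
  have "(\<Prod>e\<in>B. zpow e (if e = b then 1 else 0)) = (\<Prod>e\<in>B. if e = b then e else 1)"
    by (rule prod.cong) (simp_all add: zpow_def)
  also have "\<dots> = b" using assms finite_basis by simp
  finally show ?thesis unfolding expansion_def by (simp add: scalable_monoidD(1)[OF scalable])
qed

lemma scalar_one: "scalar 1 = 1"
  and exponent_one: "e \<in> B \<Longrightarrow> exponent 1 e = 0"
  by (simp_all flip: expansion_one add: scalar_expansion exponent_expansion)

lemma scalar_mult: "scalar (x * y) = scalar x * scalar y"
  and exponent_mult: "e \<in> B \<Longrightarrow> exponent (x * y) e = exponent x e + exponent y e"
proof -
  have "x * y = expansion sc B (scalar x * scalar y) (\<lambda>e. exponent x e + exponent y e)"
    using expansion_mult[of "scalar x" "exponent x" "scalar y" "exponent y"]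
    by (simp add: expansion_scalar_exponent)
  then show "scalar (x * y) = scalar x * scalar y"
    and "e \<in> B \<Longrightarrow> exponent (x * y) e = exponent x e + exponent y e"
    by (simp_all add: scalar_expansion exponent_expansion)
qed

lemma scalar_scale: "scalar (sc a x) = a * scalar x"
  and exponent_scale: "e \<in> B \<Longrightarrow> exponent (sc a x) e = exponent x e"
proof -
  have "sc a x = expansion sc B (a * scalar x) (exponent x)"
    using expansion_scale[of a "scalar x" "exponent x"] by (simp add: expansion_scalar_exponent)
  then show "scalar (sc a x) = a * scalar x" and "e \<in> B \<Longrightarrow> exponent (sc a x) e = exponent x e"
    by (simp_all add: scalar_expansion exponent_expansion)
qed

lemma exponent_basis: "b \<in> B \<Longrightarrow> e \<in> B \<Longrightarrow> exponent b e = (if e = b then 1 else 0)"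
  using exponent_expansion[of e 1 "\<lambda>e. if e = b then 1 else 0"] by (simp add: expansion_basis_vector)

lemma exponent_prod:
  "finite I \<Longrightarrow> e \<in> B \<Longrightarrow> exponent (\<Prod>i\<in>I. f i) e = (\<Sum>i\<in>I. exponent (f i) e)"
  by (induction I rule: finite_induct) (simp_all add: exponent_one exponent_mult)

lemma exponent_zpow:
  assumes "invertible y" "e \<in> B"
  shows "exponent (zpow y k) e = k * exponent y e"
proof -
  have power: "exponent (z ^ n) e = int n * exponent z e" for z n
    by (induction n) (simp_all add: assms(2) exponent_one exponent_mult algebra_simps)
  have "exponent (minv y) e = - exponent y e"
    using exponent_mult[OF assms(2)] exponent_one[OF assms(2)] invertible_mult_minv[OF assms(1)]
    by (metis add_eq_0_iff)
  then show ?thesis by (simp add: zpow_def power)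
qed

end

lemma quantity_basis_some_basis:
  "quantity_space sc \<Longrightarrow> quantity_basis sc (SOME B. is_basis sc B)"
  unfolding quantity_space_def quantity_basis_def by (metis someI_ex)

locale quantity_basis_pair =
  Q: quantity_basis sQ B + R: quantity_basis sR C
  for sQ :: "'k::field \<Rightarrow> 'a::comm_monoid_mult \<Rightarrow> 'a" and B
    and sR :: "'k \<Rightarrow> 'b::comm_monoid_mult \<Rightarrow> 'b" and C
begin

lemma exponent_sm_hom:
  assumes hom: "sm_hom sQ sR \<phi>" and "c \<in> C"
  shows "R.exponent (\<phi> x) c = (\<Sum>b\<in>B. Q.exponent x b * R.exponent (\<phi> b) c)"
proof -
  have "R.exponent (\<phi> x) c = R.exponent (\<phi> (sQ (Q.scalar x) (\<Prod>b\<in>B. zpow b (Q.exponent x b)))) c"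
    using Q.expansion_scalar_exponent unfolding expansion_def by metis
  also have "\<dots> = R.exponent (sR (Q.scalar x) (\<Prod>b\<in>B. zpow (\<phi> b) (Q.exponent x b))) c"
    by (simp add: sm_homD[OF hom] sm_hom_prod[OF hom] sm_hom_zpow[OF hom]
        Q.finite_basis Q.basis_invertible)
  also have "\<dots> = (\<Sum>b\<in>B. R.exponent (zpow (\<phi> b) (Q.exponent x b)) c)"
    using \<open>c \<in> C\<close> by (simp add: R.exponent_scale R.exponent_prod Q.finite_basis)
  also have "\<dots> = (\<Sum>b\<in>B. Q.exponent x b * R.exponent (\<phi> b) c)"
    using \<open>c \<in> C\<close> sm_hom_invertible[OF hom]
    by (simp add: R.exponent_zpow Q.basis_invertible)
  finally show ?thesis .
qed

definition relabel :: "('b \<Rightarrow> 'a) \<Rightarrow> 'a \<Rightarrow> 'b" where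
  "relabel g x = expansion sR C (Q.scalar x) (\<lambda>c. Q.exponent x (g c))"

lemma scalar_relabel: "R.scalar (relabel g x) = Q.scalar x"
  and exponent_relabel: "c \<in> C \<Longrightarrow> R.exponent (relabel g x) c = Q.exponent x (g c)"
  unfolding relabel_def by (simp_all add: R.scalar_expansion R.exponent_expansion)

lemma sm_hom_relabel:
  assumes "g ` C \<subseteq> B"
  shows "sm_hom sQ sR (relabel g)"
proof -
  have gB: "c \<in> C \<Longrightarrow> g c \<in> B" for c using assms by blast
  show ?thesis
    unfolding sm_hom_def
    by (intro conjI allI R.quantity_eqI)
      (simp_all add: scalar_relabel exponent_relabel gB Q.scalar_one Q.exponent_one
        R.scalar_one R.exponent_one Q.scalar_mult Q.exponent_mult R.scalar_mult R.exponent_mult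
        Q.scalar_scale Q.exponent_scale R.scalar_scale R.exponent_scale)
qed

end

text \<open>Facts added to the locale after this cyclic registration are not inherited by \<open>swap\<close>.\<close>

sublocale quantity_basis_pair \<subseteq> swap: quantity_basis_pair sR C sQ B
  by unfold_locales

context quantity_basis_pair
begin

lemma bij_relabel:
  assumes "bij_betw g C B"
  shows "bij (relabel g)"
proof -
  define h where "h = inv_into C g"
  have hg: "c \<in> C \<Longrightarrow> g c \<in> B \<and> h (g c) = c" for c
    unfolding h_def using assms bij_betwE bij_betw_inv_into_left by metis
  have gh: "b \<in> B \<Longrightarrow> h b \<in> C \<and> g (h b) = b" for b
    unfolding h_def using assms bij_betw_inv_into_right bij_betw_imp_surj_on inv_into_into by metis
  have "swap.relabel h (relabel g x) = x" for x
    by (rule Q.quantity_eqI)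
      (simp_all add: swap.scalar_relabel swap.exponent_relabel scalar_relabel exponent_relabel gh)
  moreover have "relabel g (swap.relabel h y) = y" for y
    by (rule R.quantity_eqI)
      (simp_all add: swap.scalar_relabel swap.exponent_relabel scalar_relabel exponent_relabel hg)
  ultimately show ?thesis
    by (intro o_bij[where g = "swap.relabel h"]) (simp_all add: fun_eq_iff)
qed

lemma sm_iso_if_card_eq:
  assumes "card B = card C"
  shows "\<exists>\<phi>. sm_iso sQ sR \<phi>"
proof -
  obtain g where g: "bij_betw g C B"
    using finite_same_card_bij[OF R.finite_basis Q.finite_basis] assms by metis
  then have "sm_hom sQ sR (relabel g)" by (intro sm_hom_relabel) (simp add: bij_betw_def)
  with bij_relabel[OF g] show ?thesis by (auto simp: sm_iso_iff_bij_sm_hom)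
qed

lemma card_eq_if_sm_iso:
  assumes "sm_iso sQ sR \<phi>"
  shows "card B = card C"
proof -
  have hom: "sm_hom sQ sR \<phi>" and hom_inv: "sm_hom sR sQ (inv \<phi>)"
    using assms sm_hom_inv by (auto simp: sm_iso_iff_bij_sm_hom)
  have inv_l: "inv \<phi> (\<phi> x) = x" and inv_r: "\<phi> (inv \<phi> y) = y" for x y
    using assms by (simp_all add: sm_iso_iff_bij_sm_hom bij_is_inj bij_is_surj surj_f_inv_f)
  have "int (card B) = (\<Sum>b\<in>B. Q.exponent (inv \<phi> (\<phi> b)) b)"
    by (simp add: inv_l Q.exponent_basis)
  also have "\<dots> = (\<Sum>b\<in>B. \<Sum>c\<in>C. R.exponent (\<phi> b) c * Q.exponent (inv \<phi> c) b)"
    by (rule sum.cong) (simp_all add: swap.exponent_sm_hom[OF hom_inv])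
  also have "\<dots> = (\<Sum>c\<in>C. \<Sum>b\<in>B. Q.exponent (inv \<phi> c) b * R.exponent (\<phi> b) c)"
    by (subst sum.swap) (simp add: mult.commute)
  also have "\<dots> = (\<Sum>c\<in>C. R.exponent (\<phi> (inv \<phi> c)) c)"
    by (rule sum.cong) (simp_all add: exponent_sm_hom[OF hom])
  also have "\<dots> = int (card C)"
    by (simp add: inv_r R.exponent_basis)
  finally show ?thesis by simp
qed

end

theorem proposition3p23:
  fixes sQ :: "'k::field \<Rightarrow> 'a::comm_monoid_mult \<Rightarrow> 'a"
    and sR :: "'k \<Rightarrow> 'b::comm_monoid_mult \<Rightarrow> 'b"
  assumes "quantity_space sQ" and "quantity_space sR"
  shows "(\<exists>\<phi>. sm_iso sQ sR \<phi>) \<longleftrightarrow> qrank sQ = qrank sR"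
proof -
  interpret quantity_basis_pair sQ "SOME B. is_basis sQ B" sR "SOME C. is_basis sR C"
    unfolding quantity_basis_pair_def using assms by (simp add: quantity_basis_some_basis)
  show ?thesis
    unfolding qrank_def using card_eq_if_sm_iso sm_iso_if_card_eq by blast
qed

end
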